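(* Let $\gamma_1,\gamma_2\in\mathbb{C}$ with $\mathrm{Re}(\gamma_i)>0$, let $H^i(s)=\gamma_i/(s+\gamma_i)$ with impulse responses $h^i_t=\gamma_ie^{-\gamma_it}$ ($t\ge0$), and let $H=H^1H^2$ with impulse response $h=h^1*h^2$. Let $g\colon\mathbb{R}_+\to\mathbb{C}$ be twice continuously differentiable and bounded, with $\|g\|_\infty=\sup_t|g_t|$, and set $\hat g^{(m)}_t=\int_0^th_{t-\tau}g^{(m)}_\tau\,d\tau$, where $g^{(m)}$ is the $m$-th derivative. Then, as $t\to\infty$, $$|\hat g^{(1)}_t|\le|\gamma_1|\big(\|h^2\|_1+\|h\|_1\big)\|g\|_\infty+o(1),\qquad |\hat g^{(2)}_t|\le|\gamma_1\gamma_2|\big(1+\|h^1\|_1+\|h^2\|_1+\|h\|_1\big)\|g\|_\infty+o(1),$$ where $\|\cdot\|_1$ is the $L_1(\mathbb{R}_+)$ norm and $o(1)$ denotes a term (depending on $g$) that vanishes as $t\to\infty$. In the special case $H(s)=\gamma^2/(s^2+2\zeta\gamma s+\gamma^2)$ with $\gamma>0$ and $0<\zeta\le1$ (i.e. $-\gamma_1,-\gamma_2$ the roots of $s^2+2\zeta\gamma s+\gamma^2$), $$\|h^2\|_1=\|h^1\|_1\le\frac1\zeta,\qquad \|h\|_1\le\frac1{\zeta^2}.$$ *)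

theory Defs
  imports "HOL-Analysis.Analysis"
begin

definition impresp :: "complex \<Rightarrow> real \<Rightarrow> complex" where
  "impresp \<gamma> t = \<gamma> * exp (- \<gamma> * complex_of_real t)"

definition cconv :: "(real \<Rightarrow> complex) \<Rightarrow> (real \<Rightarrow> complex) \<Rightarrow> real \<Rightarrow> complex" where
  "cconv f g t = integral {0..t} (\<lambda>\<tau>. f (t - \<tau>) * g \<tau>)"

definition L1norm :: "(real \<Rightarrow> complex) \<Rightarrow> real" where
  "L1norm f = integral {0..} (\<lambda>t. norm (f t))"

definition supnorm :: "(real \<Rightarrow> complex) \<Rightarrow> real" where
  "supnorm g = Sup ((\<lambda>t. norm (g t)) ` {0..})"

end

theory Submission
  imports Defs "HOL-Real_Asymp.Real_Asymp"
begin

text \<open>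
  The kernel H = h1 * h2 has the closed form H(t) = gamma1 gamma2 e^(-gamma1 t) Phi(t), where Phi is
  the primitive of e^((gamma1 - gamma2) t) vanishing at 0. Hence H(0) = 0,
  H' = gamma1 (h2 - H) = gamma2 (h1 - H) with H'(0) = gamma1 gamma2, and
  H'' = - gamma1 gamma2 (h1 + h2 - H). Integrating by parts in the convolution moves the
  derivatives of g onto H; the remaining convolutions are bounded by ||H'||_1 ||g||_inf and
  ||H''||_1 ||g||_inf, and the boundary terms H(t) g'(0) and H'(t) g(0) vanish as t tends to
  infinity because |H(t)| <= |gamma1 gamma2| t e^(-min(Re gamma1, Re gamma2) t).
  For the damped quadratic the two roots have modulus gamma and real part zeta gamma.
\<close>

section \<open>Causal convolution on the half-line\<close>

lemma integral_reflect_shift: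
  fixes w :: "real \<Rightarrow> 'a::banach"
  shows "integral {0..t} (\<lambda>\<tau>. w (t - \<tau>)) = integral {0..t} w"
proof -
  have "integral {-0..-(-t)} (\<lambda>x. w (t + - x)) = integral {-t..0} (\<lambda>x. w (t + x))"
    by (rule Henstock_Kurzweil_Integration.integral_reflect_real)
  also have "\<dots> = integral {0 - t..t - t} (\<lambda>x. w (x + t))"
    by (simp add: add.commute)
  also have "\<dots> = integral {0..t} w"
    by (rule integral_shift_real_ivl)
  finally show ?thesis
    by simp
qed

lemma cconv_cong: "(\<And>s. s \<in> {0..t} \<Longrightarrow> k s = k' s) \<Longrightarrow> cconv k g t = cconv k' g t"
  unfolding cconv_def by (intro integral_cong) simp

lemma has_integral_L1norm:
  "(\<lambda>t. norm (f t)) integrable_on {0..} \<Longrightarrow> ((\<lambda>t. norm (f t)) has_integral L1norm f) {0..}"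
  unfolding L1norm_def by (rule integrable_integral)

lemma L1norm_dominated:
  fixes f :: "real \<Rightarrow> complex"
  assumes f: "continuous_on {0..} f" and w: "(w has_integral I) {0..}"
    and le: "\<And>t. t \<ge> 0 \<Longrightarrow> norm (f t) \<le> w t"
  shows "(\<lambda>t. norm (f t)) integrable_on {0..}" and "L1norm f \<le> I"
proof -
  show int: "(\<lambda>t. norm (f t)) integrable_on {0..}"
  proof (rule measurable_bounded_by_integrable_imp_integrable)
    show "(\<lambda>t. norm (f t)) \<in> borel_measurable (lebesgue_on {0..})"
      using f by (intro continuous_imp_measurable_on_sets_lebesgue continuous_intros) auto
    show "w integrable_on {0..}"
      using w by blast
  qed (use le in auto)
  have "integral {0..} (\<lambda>t. norm (f t)) \<le> integral {0..} w"
    using int w le by (intro integral_le) auto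
  then show "L1norm f \<le> I"
    using w by (simp add: L1norm_def integral_unique)
qed

lemma norm_le_supnorm:
  assumes "bounded (g ` {0..})" and "t \<ge> 0"
  shows "norm (g t) \<le> supnorm g"
proof -
  have "bdd_above ((\<lambda>t. norm (g t)) ` {0..})"
    using assms(1) by (auto simp: bounded_iff bdd_above_def)
  then show ?thesis
    unfolding supnorm_def using assms(2) by (intro cSUP_upper) auto
qed

lemma norm_cconv_le:
  fixes k g :: "real \<Rightarrow> complex"
  assumes k: "continuous_on {0..} k" and k_int: "(\<lambda>s. norm (k s)) integrable_on {0..}"
    and g: "continuous_on {0..t} g" and G: "\<And>\<tau>. \<tau> \<in> {0..t} \<Longrightarrow> norm (g \<tau>) \<le> G"
    and t: "t \<ge> 0"
  shows "norm (cconv k g t) \<le> L1norm k * G"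
proof -
  have "G \<ge> 0"
    using G[of 0] t by (auto intro: order_trans[OF norm_ge_zero])
  have k_reflected: "continuous_on {0..t} (\<lambda>\<tau>. k (t - \<tau>))"
    by (intro continuous_on_compose2[OF k] continuous_intros) auto
  have "norm (cconv k g t) \<le> integral {0..t} (\<lambda>\<tau>. norm (k (t - \<tau>)) * G)"
    unfolding cconv_def
  proof (rule integral_norm_bound_integral)
    show "(\<lambda>\<tau>. k (t - \<tau>) * g \<tau>) integrable_on {0..t}"
      by (intro integrable_continuous_interval continuous_intros k_reflected g)
    show "(\<lambda>\<tau>. norm (k (t - \<tau>)) * G) integrable_on {0..t}"
      by (intro integrable_continuous_interval continuous_intros k_reflected)
    show "norm (k (t - \<tau>) * g \<tau>) \<le> norm (k (t - \<tau>)) * G" if "\<tau> \<in> {0..t}" for \<tau>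
      unfolding norm_mult using G[OF that] by (rule mult_left_mono) simp
  qed
  also have "\<dots> = integral {0..t} (\<lambda>s. norm (k s)) * G"
    using integral_reflect_shift[where w = "\<lambda>s. norm (k s)"] by simp
  also have "\<dots> \<le> L1norm k * G"
    unfolding L1norm_def
  proof (rule mult_right_mono[OF integral_subset_le \<open>G \<ge> 0\<close>])
    show "(\<lambda>s. norm (k s)) integrable_on {0..t}"
      by (intro integrable_continuous_interval continuous_intros continuous_on_subset[OF k]) auto
  qed (use k_int in auto)
  finally show ?thesis .
qed

lemma cconv_by_parts:
  fixes K K' f f' :: "real \<Rightarrow> complex"
  assumes K: "\<And>s. s \<ge> 0 \<Longrightarrow> (K has_vector_derivative K' s) (at s within {0..})"
    and K': "continuous_on {0..} K'"
    and f: "\<And>s. s \<ge> 0 \<Longrightarrow> (f has_vector_derivative f' s) (at s within {0..})"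
    and t: "t \<ge> 0"
  shows "cconv K f' t = K 0 * f t - K t * f 0 + cconv K' f t"
proof -
  have K_reflected: "((\<lambda>\<tau>. K (t - \<tau>)) has_vector_derivative - K' (t - s)) (at s within {0..t})"
    if "s \<in> {0..t}" for s
  proof -
    have reflection: "((\<lambda>\<tau>. t - \<tau>) has_vector_derivative -1) (at s within {0..t})"
      by (auto intro!: derivative_eq_intros simp flip: has_real_derivative_iff_has_vector_derivative)
    have "(K has_vector_derivative K' (t - s)) (at (t - s) within (\<lambda>\<tau>. t - \<tau>) ` {0..t})"
      using that by (intro has_vector_derivative_within_subset[OF K]) auto
    from vector_diff_chain_within[OF reflection this] show ?thesis
      by (simp add: o_def)
  qed
  have f_within: "(f has_vector_derivative f' s) (at s within {0..t})" if "s \<in> {0..t}" for s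
    using that by (intro has_vector_derivative_within_subset[OF f]) auto
  have product_rule: "((\<lambda>s. K (t - s) * f' s + - K' (t - s) * f s) has_integral K (t - t) * f t - K (t - 0) * f 0)
      {0..t}"
    using t by (intro fundamental_theorem_of_calculus has_vector_derivative_mult K_reflected f_within)
  have remainder: "((\<lambda>s. K' (t - s) * f s) has_integral cconv K' f t) {0..t}"
    unfolding cconv_def
    by (intro integrable_integral integrable_continuous_interval continuous_intros
        continuous_on_compose2[OF K'] continuous_on_vector_derivative[OF f_within]) auto
  from has_integral_add[OF product_rule remainder]
  have "((\<lambda>s. K (t - s) * f' s) has_integral K 0 * f t - K t * f 0 + cconv K' f t) {0..t}"
    by simp
  then show ?thesis
    unfolding cconv_def by (rule integral_unique)
qed

lemma norm_cconv_derivative_le: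
  fixes K K' g g' :: "real \<Rightarrow> complex"
  assumes K: "\<And>s. s \<ge> 0 \<Longrightarrow> (K has_vector_derivative K' s) (at s within {0..})" and "K 0 = 0"
    and K': "continuous_on {0..} K'" "(\<lambda>s. norm (K' s)) integrable_on {0..}"
    and g: "\<And>s. s \<ge> 0 \<Longrightarrow> (g has_vector_derivative g' s) (at s within {0..})"
    and G: "\<And>s. s \<ge> 0 \<Longrightarrow> norm (g s) \<le> G" and t: "t \<ge> 0"
  shows "norm (cconv K g' t) \<le> L1norm K' * G + norm (K t) * norm (g 0)"
proof -
  have g_cont: "continuous_on {0..} g"
    by (rule continuous_on_vector_derivative[where f' = g']) (simp add: g)
  have "norm (cconv K' g t) \<le> L1norm K' * G"
    using G t by (intro norm_cconv_le K' continuous_on_subset[OF g_cont]) auto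
  moreover have "cconv K g' t = cconv K' g t - K t * g 0"
    using cconv_by_parts[OF K K'(1) g t] \<open>K 0 = 0\<close> by simp
  ultimately show ?thesis
    using norm_triangle_ineq4[of "cconv K' g t" "K t * g 0"] by (simp add: norm_mult)
qed

lemma norm_cconv_second_derivative_le:
  fixes K K' K'' g g' g'' :: "real \<Rightarrow> complex"
  assumes K: "\<And>s. s \<ge> 0 \<Longrightarrow> (K has_vector_derivative K' s) (at s within {0..})" and "K 0 = 0"
    and K': "\<And>s. s \<ge> 0 \<Longrightarrow> (K' has_vector_derivative K'' s) (at s within {0..})"
    and K'': "continuous_on {0..} K''" "(\<lambda>s. norm (K'' s)) integrable_on {0..}"
    and g: "\<And>s. s \<ge> 0 \<Longrightarrow> (g has_vector_derivative g' s) (at s within {0..})"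
    and g': "\<And>s. s \<ge> 0 \<Longrightarrow> (g' has_vector_derivative g'' s) (at s within {0..})"
    and G: "\<And>s. s \<ge> 0 \<Longrightarrow> norm (g s) \<le> G" and t: "t \<ge> 0"
  shows "norm (cconv K g'' t)
    \<le> (norm (K' 0) + L1norm K'') * G + norm (K t) * norm (g' 0) + norm (K' t) * norm (g 0)"
proof -
  have K'_cont: "continuous_on {0..} K'"
    by (rule continuous_on_vector_derivative[where f' = K'']) (simp add: K')
  have g_cont: "continuous_on {0..} g"
    by (rule continuous_on_vector_derivative[where f' = g']) (simp add: g)
  have "cconv K g'' t = K' 0 * g t + cconv K'' g t - K t * g' 0 - K' t * g 0"
    using cconv_by_parts[OF K K'_cont g' t] cconv_by_parts[OF K' K''(1) g t] \<open>K 0 = 0\<close> by simp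
  then have "norm (cconv K g'' t)
      \<le> norm (K' 0 * g t) + norm (cconv K'' g t) + norm (K t * g' 0) + norm (K' t * g 0)"
    by (smt (verit) norm_triangle_ineq norm_triangle_ineq4)
  moreover have "norm (cconv K'' g t) \<le> L1norm K'' * G"
    using G t by (intro norm_cconv_le K'' continuous_on_subset[OF g_cont]) auto
  moreover have "norm (K' 0 * g t) \<le> norm (K' 0) * G"
    unfolding norm_mult using G[OF t] by (rule mult_left_mono) simp
  ultimately show ?thesis
    by (simp add: norm_mult distrib_right)
qed

section \<open>First-order impulse responses and their convolution\<close>

definition exp_primitive :: "complex \<Rightarrow> complex \<Rightarrow> complex" where
  "exp_primitive c z = (if c = 0 then z else (exp (c * z) - 1) / c)"

lemma exp_primitive_0 [simp]: "exp_primitive c 0 = 0"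
  by (simp add: exp_primitive_def)

lemma mult_exp_primitive: "c * exp_primitive c z = exp (c * z) - 1"
  by (simp add: exp_primitive_def)

lemma has_field_derivative_exp_primitive:
  "(exp_primitive c has_field_derivative exp (c * z)) (at z within S)"
proof (cases "c = 0")
  case True
  then have "exp_primitive c = (\<lambda>z. z)"
    by (simp add: exp_primitive_def fun_eq_iff)
  then show ?thesis
    using True by (auto intro!: derivative_eq_intros)
next
  case False
  then have "exp_primitive c = (\<lambda>z. (exp (c * z) - 1) / c)"
    by (simp add: exp_primitive_def fun_eq_iff)
  then show ?thesis
    using False by (auto intro!: derivative_eq_intros)
qed

lemma mult_exp_exp_diff: "exp (- a * z) * exp ((a - b) * z) = exp (- b * (z :: complex))"
  by (simp add: mult_exp_exp algebra_simps)

lemma has_integral_mult_exp_minus: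
  fixes m :: real
  assumes "m > 0"
  shows "((\<lambda>t. t * exp (- m * t)) has_integral 1 / m\<^sup>2) {0..}"
proof (rule has_integral_to_inf)
  let ?F = "\<lambda>y. - (y / m + 1 / m\<^sup>2) * exp (- m * y)"
  show "(\<lambda>t. t * exp (- m * t)) integrable_on {0..y}" for y
    by (intro integrable_continuous_interval continuous_intros)
  have "((\<lambda>t. t * exp (- m * t)) has_integral ?F y - ?F 0) {0..y}" if "y \<ge> 0" for y
    using that assms
    by (intro fundamental_theorem_of_calculus)
       (auto intro!: derivative_eq_intros simp: field_simps power2_eq_square
             simp flip: has_real_derivative_iff_has_vector_derivative)
  then have "\<forall>\<^sub>F y in at_top. integral {0..y} (\<lambda>t. t * exp (- m * t)) = ?F y + 1 / m\<^sup>2"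
    by (auto intro: eventually_mono[OF eventually_ge_at_top[of 0]])
  moreover have "((\<lambda>y. ?F y + 1 / m\<^sup>2) \<longlongrightarrow> 1 / m\<^sup>2) at_top"
    using assms by real_asymp
  ultimately show "((\<lambda>y. integral {0..y} (\<lambda>t. t * exp (- m * t))) \<longlongrightarrow> 1 / m\<^sup>2) at_top"
    by (simp add: filterlim_cong)
  show "0 \<le> y * exp (- m * y)" if "0 \<le> y" for y
    using that by simp
qed

lemma norm_impresp: "norm (impresp g t) = norm g * exp (- Re g * t)"
  by (simp add: impresp_def norm_mult)

lemma has_vector_derivative_impresp:
  "(impresp g has_vector_derivative - g * impresp g t) (at t within S)"
proof -
  have "((\<lambda>z. g * exp (- g * z)) has_field_derivative - g * (g * exp (- g * t))) (at (of_real t))"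
    by (auto intro!: derivative_eq_intros simp: algebra_simps)
  from has_vector_derivative_real_field[OF this] show ?thesis
    by (simp add: impresp_def[abs_def])
qed

lemma continuous_on_impresp: "continuous_on S (impresp g)"
  using has_vector_derivative_impresp by (rule continuous_on_vector_derivative)

lemma impresp_tendsto_0:
  assumes "Re g > 0"
  shows "(impresp g \<longlongrightarrow> 0) at_top"
proof (rule Lim_null_comparison)
  show "\<forall>\<^sub>F t in at_top. norm (impresp g t) \<le> norm g * exp (- Re g * t)"
    by (simp add: norm_impresp)
  show "((\<lambda>t. norm g * exp (- Re g * t)) \<longlongrightarrow> 0) at_top"
    using assms by real_asymp
qed

lemma has_integral_norm_impresp:
  assumes "Re g > 0"
  shows "((\<lambda>t. norm (impresp g t)) has_integral norm g / Re g) {0..}"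
  using has_integral_mult_right[OF has_integral_exp_minus_to_infinity[OF assms, of 0], of "norm g"]
  by (simp add: norm_impresp)

lemma integrable_norm_impresp: "Re g > 0 \<Longrightarrow> (\<lambda>t. norm (impresp g t)) integrable_on {0..}"
  using has_integral_norm_impresp by blast

lemma L1norm_impresp: "Re g > 0 \<Longrightarrow> L1norm (impresp g) = norm g / Re g"
  unfolding L1norm_def by (rule integral_unique[OF has_integral_norm_impresp])

text \<open>The closed form of cconv (impresp a) (impresp b), defined on all of R so that it is
  differentiable everywhere.\<close>

definition impresp_conv :: "complex \<Rightarrow> complex \<Rightarrow> real \<Rightarrow> complex" where
  "impresp_conv a b t = a * b * exp (- a * t) * exp_primitive (a - b) t"

lemma impresp_conv_0 [simp]: "impresp_conv a b 0 = 0"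
  by (simp add: impresp_conv_def)

lemma cconv_impresp_impresp:
  assumes "t \<ge> 0"
  shows "cconv (impresp a) (impresp b) t = impresp_conv a b t"
proof -
  have "impresp a (t - \<tau>) * impresp b \<tau> = a * b * exp (- a * t) * exp ((a - b) * \<tau>)" for \<tau>
    by (simp add: impresp_def mult_exp_exp algebra_simps)
  moreover have "((\<lambda>\<tau>. exp ((a - b) * of_real \<tau>)) has_integral exp_primitive (a - b) t) {0..t}"
    using fundamental_theorem_of_calculus[OF assms
        has_vector_derivative_real_field[OF has_field_derivative_exp_primitive]]
    by simp
  ultimately show ?thesis
    unfolding cconv_def impresp_conv_def by (simp add: integral_unique has_integral_mult_right)
qed

lemma has_vector_derivative_impresp_conv:
  "(impresp_conv a b has_vector_derivative a * (impresp b t - impresp_conv a b t)) (at t within S)"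
proof -
  let ?z = "complex_of_real t"
  have "((\<lambda>z. a * b * exp (- a * z) * exp_primitive (a - b) z) has_field_derivative
      a * b * (- a * exp (- a * ?z)) * exp_primitive (a - b) ?z
        + a * b * (exp (- a * ?z) * exp ((a - b) * ?z))) (at ?z)"
    by (auto intro!: derivative_eq_intros has_field_derivative_exp_primitive simp: algebra_simps)
  also have "a * b * (- a * exp (- a * ?z)) * exp_primitive (a - b) ?z
        + a * b * (exp (- a * ?z) * exp ((a - b) * ?z)) = a * (impresp b t - impresp_conv a b t)"
    unfolding mult_exp_exp_diff by (simp add: impresp_def impresp_conv_def algebra_simps)
  finally show ?thesis
    unfolding impresp_conv_def[abs_def] by (rule has_vector_derivative_real_field)
qed

lemma impresp_conv_derivative_sym:
  "a * (impresp b t - impresp_conv a b t) = b * (impresp a t - impresp_conv a b t)"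
proof -
  let ?z = "complex_of_real t"
  have "(a - b) * impresp_conv a b t = a * b * exp (- a * ?z) * ((a - b) * exp_primitive (a - b) ?z)"
    by (simp add: impresp_conv_def algebra_simps)
  also have "\<dots> = a * b * (exp (- a * ?z) * exp ((a - b) * ?z)) - a * b * exp (- a * ?z)"
    by (simp add: mult_exp_primitive algebra_simps)
  also have "\<dots> = a * impresp b t - b * impresp a t"
    unfolding mult_exp_exp_diff by (simp add: impresp_def algebra_simps)
  finally show ?thesis
    by (simp add: algebra_simps)
qed

lemma has_vector_derivative_impresp_conv_derivative:
  "((\<lambda>t. a * (impresp b t - impresp_conv a b t)) has_vector_derivative
      - (a * b) * (impresp a t + impresp b t - impresp_conv a b t)) (at t within S)"
proof -
  have "((\<lambda>t. a * (impresp b t - impresp_conv a b t)) has_vector_derivative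
      a * (- b * impresp b t - a * (impresp b t - impresp_conv a b t))) (at t within S)"
    by (intro has_vector_derivative_mult_right has_vector_derivative_diff
        has_vector_derivative_impresp has_vector_derivative_impresp_conv)
  also have "a * (- b * impresp b t - a * (impresp b t - impresp_conv a b t))
      = - (a * b) * (impresp a t + impresp b t - impresp_conv a b t)"
    by (subst impresp_conv_derivative_sym) (simp add: algebra_simps)
  finally show ?thesis .
qed

lemma continuous_on_impresp_conv: "continuous_on S (impresp_conv a b)"
  using has_vector_derivative_impresp_conv by (rule continuous_on_vector_derivative)

lemma norm_impresp_conv_le:
  assumes "t \<ge> 0"
  shows "norm (impresp_conv a b t) \<le> norm a * norm b * (t * exp (- min (Re a) (Re b) * t))"
proof -
  let ?m = "min (Re a) (Re b)" and ?f = "\<lambda>\<tau>. impresp a (t - \<tau>) * impresp b \<tau>"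
  have "continuous_on {0..t} ?f"
    by (intro continuous_intros continuous_on_impresp
        continuous_on_compose2[OF continuous_on_impresp[of UNIV]]) auto
  then have "(?f has_integral integral {0..t} ?f) {0..t}"
    by (intro integrable_integral integrable_continuous_interval)
  then have "(?f has_integral impresp_conv a b t) {0..t}"
    using cconv_impresp_impresp[OF assms, of a b] by (simp add: cconv_def)
  moreover have "norm (?f \<tau>) \<le> norm a * norm b * exp (- ?m * t)" if "\<tau> \<in> {0..t}" for \<tau>
  proof -
    have "?m * (t - \<tau>) + ?m * \<tau> \<le> Re a * (t - \<tau>) + Re b * \<tau>"
      using that by (intro add_mono mult_right_mono) auto
    then have "exp (- Re a * (t - \<tau>)) * exp (- Re b * \<tau>) \<le> exp (- ?m * t)"
      by (simp add: mult_exp_exp algebra_simps)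
    then show ?thesis
      by (simp add: norm_mult norm_impresp mult_left_mono algebra_simps)
  qed
  ultimately have "norm (impresp_conv a b t)
      \<le> norm a * norm b * exp (- ?m * t) * Henstock_Kurzweil_Integration.content {0..t}"
    by (intro has_integral_bound_real[where S = "{}"]) auto
  then show ?thesis
    using assms by (simp add: algebra_simps)
qed

lemma impresp_conv_tendsto_0:
  assumes "Re a > 0" and "Re b > 0"
  shows "(impresp_conv a b \<longlongrightarrow> 0) at_top"
proof (rule Lim_null_comparison)
  define m where "m = min (Re a) (Re b)"
  show "\<forall>\<^sub>F t in at_top. norm (impresp_conv a b t) \<le> norm a * norm b * (t * exp (- m * t))"
    unfolding m_def by (intro eventually_mono[OF eventually_ge_at_top[of 0]] norm_impresp_conv_le)
  have "m > 0"
    using assms by (simp add: m_def)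
  then show "((\<lambda>t. norm a * norm b * (t * exp (- m * t))) \<longlongrightarrow> 0) at_top"
    by real_asymp
qed

lemma impresp_conv_derivative_tendsto_0:
  assumes "Re a > 0" and "Re b > 0"
  shows "((\<lambda>t. a * (impresp b t - impresp_conv a b t)) \<longlongrightarrow> 0) at_top"
proof -
  have "((\<lambda>t. a * (impresp b t - impresp_conv a b t)) \<longlongrightarrow> a * (0 - 0)) at_top"
    using assms by (intro tendsto_mult tendsto_const tendsto_diff impresp_tendsto_0 impresp_conv_tendsto_0)
  then show ?thesis
    by simp
qed

lemma integrable_norm_impresp_conv:
  assumes "Re a > 0" and "Re b > 0"
  shows "(\<lambda>t. norm (impresp_conv a b t)) integrable_on {0..}"
proof -
  have "min (Re a) (Re b) > 0"
    using assms by simp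
  from L1norm_dominated(1)[OF continuous_on_impresp_conv
      has_integral_mult_right[OF has_integral_mult_exp_minus[OF this]] norm_impresp_conv_le]
  show ?thesis .
qed

lemma L1norm_impresp_conv_le:
  assumes "Re a > 0" and "Re b > 0"
  shows "L1norm (impresp_conv a b) \<le> norm a * norm b / (min (Re a) (Re b))\<^sup>2"
proof -
  have "min (Re a) (Re b) > 0"
    using assms by simp
  from L1norm_dominated(2)[OF continuous_on_impresp_conv
      has_integral_mult_right[OF has_integral_mult_exp_minus[OF this]] norm_impresp_conv_le]
  show ?thesis
    by simp
qed

lemma norm_cconv_impresp_conv_derivative_le:
  assumes ab: "Re a > 0" "Re b > 0"
    and g: "\<And>s. s \<ge> 0 \<Longrightarrow> (g has_vector_derivative g' s) (at s within {0..})"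
    and G: "\<And>s. s \<ge> 0 \<Longrightarrow> norm (g s) \<le> G" and t: "t \<ge> 0"
  shows "norm (cconv (impresp_conv a b) g' t)
    \<le> norm a * (L1norm (impresp b) + L1norm (impresp_conv a b)) * G
      + norm (impresp_conv a b t) * norm (g 0)"
proof -
  let ?H' = "\<lambda>t. a * (impresp b t - impresp_conv a b t)"
  have H'_cont: "continuous_on {0..} ?H'"
    by (intro continuous_intros continuous_on_impresp continuous_on_impresp_conv)
  have "((\<lambda>t. norm a * (norm (impresp b t) + norm (impresp_conv a b t))) has_integral
      norm a * (L1norm (impresp b) + L1norm (impresp_conv a b))) {0..}"
    using ab by (intro has_integral_mult_right has_integral_add has_integral_L1norm
        integrable_norm_impresp integrable_norm_impresp_conv)
  moreover have "norm (?H' t) \<le> norm a * (norm (impresp b t) + norm (impresp_conv a b t))" for t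
    unfolding norm_mult by (rule mult_left_mono[OF norm_triangle_ineq4]) simp
  ultimately have H'_int: "(\<lambda>t. norm (?H' t)) integrable_on {0..}"
    and H'_L1: "L1norm ?H' \<le> norm a * (L1norm (impresp b) + L1norm (impresp_conv a b))"
    using L1norm_dominated[OF H'_cont] by blast+
  have "G \<ge> 0"
    using G[of 0] norm_ge_zero order_trans by blast
  then show ?thesis
    using norm_cconv_derivative_le[OF has_vector_derivative_impresp_conv impresp_conv_0 H'_cont
        H'_int g G t] mult_right_mono[OF H'_L1]
    by fastforce
qed

lemma norm_cconv_impresp_conv_second_derivative_le:
  assumes ab: "Re a > 0" "Re b > 0"
    and g: "\<And>s. s \<ge> 0 \<Longrightarrow> (g has_vector_derivative g' s) (at s within {0..})"
    and g': "\<And>s. s \<ge> 0 \<Longrightarrow> (g' has_vector_derivative g'' s) (at s within {0..})"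
    and G: "\<And>s. s \<ge> 0 \<Longrightarrow> norm (g s) \<le> G" and t: "t \<ge> 0"
  shows "norm (cconv (impresp_conv a b) g'' t)
    \<le> norm (a * b) * (1 + L1norm (impresp a) + L1norm (impresp b) + L1norm (impresp_conv a b)) * G
      + (norm (impresp_conv a b t) * norm (g' 0)
        + norm (a * (impresp b t - impresp_conv a b t)) * norm (g 0))"
proof -
  let ?H'' = "\<lambda>t. - (a * b) * (impresp a t + impresp b t - impresp_conv a b t)"
  let ?L1 = "L1norm (impresp a) + L1norm (impresp b) + L1norm (impresp_conv a b)"
  have H''_cont: "continuous_on {0..} ?H''"
    by (intro continuous_intros continuous_on_impresp continuous_on_impresp_conv)
  have "((\<lambda>t. norm (a * b) * (norm (impresp a t) + norm (impresp b t) + norm (impresp_conv a b t)))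
      has_integral norm (a * b) * ?L1) {0..}"
    using ab by (intro has_integral_mult_right has_integral_add has_integral_L1norm
        integrable_norm_impresp integrable_norm_impresp_conv)
  moreover have "norm (?H'' t)
      \<le> norm (a * b) * (norm (impresp a t) + norm (impresp b t) + norm (impresp_conv a b t))" for t
  proof -
    have "norm (impresp a t + impresp b t - impresp_conv a b t)
        \<le> norm (impresp a t) + norm (impresp b t) + norm (impresp_conv a b t)"
      by (smt (verit) norm_triangle_ineq norm_triangle_ineq4)
    then show ?thesis
      unfolding norm_mult norm_minus_cancel by (rule mult_left_mono) simp
  qed
  ultimately have H''_int: "(\<lambda>t. norm (?H'' t)) integrable_on {0..}"
    and H''_L1: "L1norm ?H'' \<le> norm (a * b) * ?L1"
    using L1norm_dominated[OF H''_cont] by blast+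
  have "G \<ge> 0"
    using G[of 0] norm_ge_zero order_trans by blast
  then have "(norm (a * (impresp b 0 - impresp_conv a b 0)) + L1norm ?H'') * G
      \<le> norm (a * b) * (1 + ?L1) * G"
    using mult_right_mono[OF H''_L1] by (simp add: impresp_def algebra_simps)
  then show ?thesis
    using norm_cconv_second_derivative_le[OF has_vector_derivative_impresp_conv impresp_conv_0
        has_vector_derivative_impresp_conv_derivative H''_cont H''_int g g' G t]
    by (simp add: add.assoc)
qed

section \<open>Damped second-order systems\<close>

lemma damped_quadratic_root:
  fixes a b :: complex and \<gamma> \<zeta> :: real
  assumes "\<gamma> > 0" and "0 < \<zeta>" and "\<zeta> \<le> 1"
    and factor: "\<And>s. s\<^sup>2 + 2 * of_real \<zeta> * of_real \<gamma> * s + (of_real \<gamma>)\<^sup>2 = (s + a) * (s + b)"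
  shows "Re a = \<zeta> * \<gamma>" and "norm a = \<gamma>"
proof -
  have prod: "a * b = of_real (\<gamma>\<^sup>2)"
    using factor[of 0] by simp
  have "1 + 2 * of_real \<zeta> * of_real \<gamma> + (of_real \<gamma>)\<^sup>2 = 1 + (a + b) + a * b"
    using factor[of 1] by (simp add: algebra_simps)
  then have sum: "a + b = of_real (2 * \<zeta> * \<gamma>)"
    using prod by simp
  have Re_b: "Re b = 2 * \<zeta> * \<gamma> - Re a" and Im_b: "Im b = - Im a"
    using arg_cong[OF sum, of Re] arg_cong[OF sum, of Im] by auto
  have Re_prod: "Re a * (2 * \<zeta> * \<gamma> - Re a) + (Im a)\<^sup>2 = \<gamma>\<^sup>2"
    using arg_cong[OF prod, of Re] Re_b Im_b by (simp add: power2_eq_square)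
  have Im_prod: "Im a * (2 * \<zeta> * \<gamma> - 2 * Re a) = 0"
    using arg_cong[OF prod, of Im] Re_b Im_b by (simp add: algebra_simps)
  show Re_a: "Re a = \<zeta> * \<gamma>"
  proof (cases "Im a = 0")
    case True
    then have "(Re a - \<zeta> * \<gamma>)\<^sup>2 = (\<zeta>\<^sup>2 - 1) * \<gamma>\<^sup>2"
      using Re_prod by (simp add: power2_eq_square algebra_simps)
    also have "\<dots> \<le> 0"
      using assms(2,3) by (intro mult_nonpos_nonneg) (auto simp: power2_eq_square mult_le_one)
    finally show ?thesis
      by simp
  next
    case False
    then show ?thesis
      using Im_prod by simp
  qed
  have "(norm a)\<^sup>2 = \<gamma>\<^sup>2"
    using Re_prod Re_a cmod_power2[of a] by (simp add: power2_eq_square algebra_simps)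
  then show "norm a = \<gamma>"
    using assms(1) by simp
qed

lemma L1norms_damped_second_order:
  fixes a b :: complex and \<gamma> \<zeta> :: real
  assumes "\<gamma> > 0" and "0 < \<zeta>" and "\<zeta> \<le> 1"
    and factor: "\<And>s. s\<^sup>2 + 2 * of_real \<zeta> * of_real \<gamma> * s + (of_real \<gamma>)\<^sup>2 = (s + a) * (s + b)"
  shows "L1norm (impresp a) = 1 / \<zeta>" and "L1norm (impresp b) = 1 / \<zeta>"
    and "L1norm (impresp_conv a b) \<le> 1 / \<zeta>\<^sup>2"
proof -
  note a = damped_quadratic_root[OF assms(1-3) factor]
  note b = damped_quadratic_root[OF assms(1-3) factor[unfolded mult.commute[of "_ + a"]]]
  have "Re a > 0" and "Re b > 0"
    using a b assms by simp_all
  then show "L1norm (impresp a) = 1 / \<zeta>" and "L1norm (impresp b) = 1 / \<zeta>"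
    using a b assms(1) by (simp_all add: L1norm_impresp)
  have "L1norm (impresp_conv a b) \<le> norm a * norm b / (min (Re a) (Re b))\<^sup>2"
    by (rule L1norm_impresp_conv_le) fact+
  also have "\<dots> = 1 / \<zeta>\<^sup>2"
    using a b assms(1) by (simp add: power2_eq_square)
  finally show "L1norm (impresp_conv a b) \<le> 1 / \<zeta>\<^sup>2" .
qed

theorem propositionA8:
  fixes \<gamma>1 \<gamma>2 :: complex and g g1 g2 :: "real \<Rightarrow> complex"
  assumes "Re \<gamma>1 > 0" and "Re \<gamma>2 > 0"
    and "\<And>t. t \<ge> 0 \<Longrightarrow> (g has_vector_derivative g1 t) (at t within {0..})"
    and "\<And>t. t \<ge> 0 \<Longrightarrow> (g1 has_vector_derivative g2 t) (at t within {0..})"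
    and "continuous_on {0..} g2"
    and "bounded (g ` {0..})"
  shows
    "(\<exists>e. (e \<longlongrightarrow> 0) at_top \<and>
       (\<forall>\<^sub>F t in at_top.
          norm (cconv (cconv (impresp \<gamma>1) (impresp \<gamma>2)) g1 t)
            \<le> norm \<gamma>1 * (L1norm (impresp \<gamma>2) + L1norm (cconv (impresp \<gamma>1) (impresp \<gamma>2)))
                * supnorm g + e t))
    \<and> (\<exists>e. (e \<longlongrightarrow> 0) at_top \<and>
       (\<forall>\<^sub>F t in at_top.
          norm (cconv (cconv (impresp \<gamma>1) (impresp \<gamma>2)) g2 t)
            \<le> norm (\<gamma>1 * \<gamma>2) * (1 + L1norm (impresp \<gamma>1) + L1norm (impresp \<gamma>2)
                 + L1norm (cconv (impresp \<gamma>1) (impresp \<gamma>2))) * supnorm g + e t))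
    \<and> (\<forall>\<gamma> \<zeta> :: real. \<gamma> > 0 \<longrightarrow> 0 < \<zeta> \<longrightarrow> \<zeta> \<le> 1 \<longrightarrow>
       (\<forall>s::complex. s\<^sup>2 + 2 * of_real \<zeta> * of_real \<gamma> * s + (of_real \<gamma>)\<^sup>2 = (s + \<gamma>1) * (s + \<gamma>2)) \<longrightarrow>
       L1norm (impresp \<gamma>2) = L1norm (impresp \<gamma>1) \<and> L1norm (impresp \<gamma>1) \<le> 1 / \<zeta>
       \<and> L1norm (cconv (impresp \<gamma>1) (impresp \<gamma>2)) \<le> 1 / \<zeta>\<^sup>2)"
proof -
  let ?h = "cconv (impresp \<gamma>1) (impresp \<gamma>2)" and ?H = "impresp_conv \<gamma>1 \<gamma>2"
  have kernel: "cconv ?h f t = cconv ?H f t" if "t \<ge> 0" for f t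
    by (rule cconv_cong) (simp add: cconv_impresp_impresp)
  have L1_kernel: "L1norm ?h = L1norm ?H"
    unfolding L1norm_def by (intro integral_cong) (simp add: cconv_impresp_impresp)
  have G: "norm (g s) \<le> supnorm g" if "s \<ge> 0" for s
    using assms(6) that by (rule norm_le_supnorm)
  have "\<forall>\<^sub>F t in at_top. norm (cconv ?h g1 t)
      \<le> norm \<gamma>1 * (L1norm (impresp \<gamma>2) + L1norm ?h) * supnorm g + norm (?H t) * norm (g 0)"
    using eventually_ge_at_top[of 0] by eventually_elim
      (simp add: kernel L1_kernel G assms norm_cconv_impresp_conv_derivative_le)
  moreover have "\<forall>\<^sub>F t in at_top. norm (cconv ?h g2 t)
      \<le> norm (\<gamma>1 * \<gamma>2) * (1 + L1norm (impresp \<gamma>1) + L1norm (impresp \<gamma>2) + L1norm ?h) * supnorm g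
        + (norm (?H t) * norm (g1 0) + norm (\<gamma>1 * (impresp \<gamma>2 t - ?H t)) * norm (g 0))"
    using eventually_ge_at_top[of 0] by eventually_elim
      (simp add: kernel L1_kernel G assms norm_cconv_impresp_conv_second_derivative_le)
  moreover have "((\<lambda>t. norm (?H t) * norm (g 0)) \<longlongrightarrow> 0) at_top"
    and "((\<lambda>t. norm (?H t) * norm (g1 0) + norm (\<gamma>1 * (impresp \<gamma>2 t - ?H t)) * norm (g 0))
      \<longlongrightarrow> 0) at_top"
    using assms(1,2) by (auto intro!: tendsto_add_zero tendsto_mult_left_zero tendsto_norm_zero
        impresp_conv_tendsto_0 impresp_conv_derivative_tendsto_0)
  moreover note L1norms_damped_second_order[of _ _ \<gamma>1 \<gamma>2]
  ultimately show ?thesis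
    by (auto simp: L1_kernel)
qed

end
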